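(* Let $c$ be a cost function on $(\mathbb{R}^n)^N$, $\alpha_1,\dots,\alpha_N>0$, and $m_1,\dots,m_N$ measures on $\mathbb{R}^n$. Let $(V_1,\dots,V_N)$ be an admissible tuple with $0<\int e^{-\alpha_iV_i}dm_i<\infty$ for all $i$, and let $\nu_i=e^{-\alpha_iV_i}m_i/\int e^{-\alpha_iV_i}dm_i$. Assume that the Kantorovich duality holds for $(c;\nu_1,\dots,\nu_N)$, with optimal plan $\gamma$ and dual minimizer $(\Phi_1,\dots,\Phi_N)$. Then $$\prod_{i=1}^N\Bigl(\int e^{-\alpha_iV_i}dm_i\Bigr)^{1/\alpha_i}\le\prod_{i=1}^N\Bigl(\int e^{-\alpha_i\Phi_i}dm_i\Bigr)^{1/\alpha_i}.$$
   Context: Points of $(\mathbb{R}^n)^N$ are written $x=(x_1,\dots,x_N)$, $x_i\in\mathbb{R}^n$. A tuple $(V_1,\dots,V_N)$ of functions $V_i:\mathbb{R}^n\to(-\infty,+\infty]$ is admissible (for the cost $c$) if $\sum_{i=1}^N V_i(x_i)\ge c(x)$ for all $x$. Kantorovich duality: for probability measures $\mu_1,\dots,\mu_N$ on $\mathbb{R}^n$, the primal problem is to maximize $\int c\,d\pi$ over probability measures $\pi$ on $(\mathbb{R}^n)^N$ with $i$-th marginal $\mu_i$ for all $i$; the dual problem is to minimize $\sum_i\int f_i\,d\mu_i$ over admissible tuples $(f_i)$ with $f_i\in L^1(\mu_i)$. We say the Kantorovich duality holds for $(c;\mu_1,\dots,\mu_N)$ if the primal problem has a maximizer, the dual problem has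 a minimizer, and the two optimal values are equal and finite. *)

theory Defs
  imports "HOL-Probability.Probability"
begin

text \<open>Points of (R^n)^N are functions x :: nat => 'a (with 'a a Euclidean space
  playing the role of R^n), only the coordinates x i for i < N being relevant.
  Potentials take values in (-inf, +inf], rendered as ereal-valued functions never
  equal to -inf.\<close>

definition admissible :: "nat \<Rightarrow> ((nat \<Rightarrow> 'b) \<Rightarrow> real) \<Rightarrow> (nat \<Rightarrow> 'b \<Rightarrow> ereal) \<Rightarrow> bool"
  where "admissible N c V \<longleftrightarrow>
     (\<forall>i<N. \<forall>x. V i x \<noteq> -\<infinity>) \<and> (\<forall>x. (\<Sum>i<N. V i (x i)) \<ge> ereal (c x))"

definition expneg :: "real \<Rightarrow> ereal \<Rightarrow> real"
  where "expneg a v = (if v = \<infinity> then 0 else exp (- a * real_of_ereal v))"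

definition eL1 :: "'a measure \<Rightarrow> ('a \<Rightarrow> ereal) \<Rightarrow> bool"
  where "eL1 M f \<longleftrightarrow> f \<in> borel_measurable M \<and> (AE x in M. \<bar>f x\<bar> \<noteq> \<infinity>)
                      \<and> integrable M (\<lambda>x. real_of_ereal (f x))"

definition eint :: "'a measure \<Rightarrow> ('a \<Rightarrow> ereal) \<Rightarrow> real"
  where "eint M f = (\<integral>x. real_of_ereal (f x) \<partial>M)"

definition plan :: "nat \<Rightarrow> (nat \<Rightarrow> 'a::euclidean_space measure) \<Rightarrow> (nat \<Rightarrow> 'a) measure \<Rightarrow> bool"
  where "plan N \<mu> \<pi> \<longleftrightarrow> prob_space \<pi> \<and> sets \<pi> = sets (PiM {..<N} (\<lambda>_. borel))
             \<and> (\<forall>i<N. distr \<pi> borel (\<lambda>x. x i) = \<mu> i)"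

text \<open>Kantorovich duality holds for (c; mu_1..mu_N), with optimal plan gam and dual
  minimizer Phi: gam maximizes the primal (plans for which c is not integrable have
  primal value -inf, since c is bounded above by an integrable admissible sum),
  Phi minimizes the dual among admissible L^1 tuples, and the values agree (finite,
  being reals).\<close>
definition kantorovich_duality ::
  "nat \<Rightarrow> ((nat \<Rightarrow> 'a::euclidean_space) \<Rightarrow> real) \<Rightarrow> (nat \<Rightarrow> 'a measure)
    \<Rightarrow> (nat \<Rightarrow> 'a) measure \<Rightarrow> (nat \<Rightarrow> 'a \<Rightarrow> ereal) \<Rightarrow> bool"
  where "kantorovich_duality N c \<mu> gam Phi \<longleftrightarrow>
     plan N \<mu> gam \<and> integrable gam c \<and>
     (\<forall>\<pi>. plan N \<mu> \<pi> \<and> integrable \<pi> c \<longrightarrow> (\<integral>x. c x \<partial>\<pi>) \<le> (\<integral>x. c x \<partial>gam)) \<and>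
     admissible N c Phi \<and> (\<forall>i<N. eL1 (\<mu> i) (Phi i)) \<and>
     (\<forall>f. admissible N c f \<and> (\<forall>i<N. eL1 (\<mu> i) (f i)) \<longrightarrow>
          (\<Sum>i<N. eint (\<mu> i) (Phi i)) \<le> (\<Sum>i<N. eint (\<mu> i) (f i))) \<and>
     (\<integral>x. c x \<partial>gam) = (\<Sum>i<N. eint (\<mu> i) (Phi i))"

definition ennpow :: "ennreal \<Rightarrow> real \<Rightarrow> ennreal"
  where "ennpow x p = (if x = \<top> then \<top> else ennreal (enn2real x powr p))"

end

(*
  Put u_i = V_i - Phi_i. Since nu_i has density e^(-alpha_i V_i) / Z_i with respect to m_i,
  Z_i * \<integral> e^(alpha_i u_i) d nu_i is at most \<integral> e^(-alpha_i Phi_i) dm_i =: P_i, and Jensen's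
  inequality turns this into Z_i^(1/alpha_i) * e^(\<integral> u_i d nu_i) \<le> P_i^(1/alpha_i).
  By complementary slackness, Sum_i Phi_i(x_i) = c(x) \<le> Sum_i V_i(x_i) for gam-a.e. x, so
  Sum_i \<integral> u_i d nu_i = \<integral> Sum_i u_i(x_i) d gam \<ge> 0; the same pointwise bound, together with
  the exponential integrability of u_i, shows that each u_i is nu_i-integrable.
  Multiplying the N inequalities gives the claim.
*)

theory Submission
  imports Defs
begin

lemma expneg_measurable [measurable]:
  assumes [measurable]: "f \<in> borel_measurable M"
  shows "(\<lambda>x. expneg a (f x)) \<in> borel_measurable M"
  unfolding expneg_def by measurable

lemma expneg_nonneg: "0 \<le> expneg a v"
  by (simp add: expneg_def)

lemma expneg_pos: "\<bar>v\<bar> \<noteq> \<infinity> \<Longrightarrow> 0 < expneg a v"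
  by (cases v) (auto simp: expneg_def)

lemma expneg_mult_exp_le:
  assumes "\<bar>w\<bar> \<noteq> \<infinity>"
  shows "expneg a v * exp (a * (real_of_ereal v - real_of_ereal w)) \<le> expneg a w"
proof (cases "v = \<infinity>")
  case False
  then have "expneg a v * exp (a * (real_of_ereal v - real_of_ereal w)) = expneg a w"
    using assms by (auto simp: expneg_def algebra_simps simp flip: exp_add)
  then show ?thesis by simp
qed (simp add: expneg_def)

lemma ennpow_eq_ennreal: "x \<noteq> \<top> \<Longrightarrow> ennpow x p = ennreal (enn2real x powr p)"
  by (simp add: ennpow_def)

lemma prod_ennpow_eq_ennreal:
  assumes "\<forall>i\<in>I. X i \<noteq> \<top>"
  shows "(\<Prod>i\<in>I. ennpow (X i) (p i)) = ennreal (\<Prod>i\<in>I. enn2real (X i) powr p i)"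
  using assms by (simp add: ennpow_eq_ennreal prod_ennreal)

lemma prod_ennpow_eq_top:
  assumes "finite I" "k \<in> I" "X k = \<top>" "\<forall>i\<in>I. X i \<noteq> 0"
  shows "(\<Prod>i\<in>I. ennpow (X i) (p i)) = \<top>"
  using assms by (subst ennreal_prod_eq_top) (auto simp: ennpow_def enn2real_eq_0_iff)

lemma prod_le_prod_of_exp_sum_nonneg:
  fixes x y b :: "'i \<Rightarrow> real"
  assumes "\<forall>i\<in>I. 0 \<le> x i" "\<forall>i\<in>I. x i * exp (b i) \<le> y i" "0 \<le> (\<Sum>i\<in>I. b i)"
  shows "(\<Prod>i\<in>I. x i) \<le> (\<Prod>i\<in>I. y i)"
proof -
  have "(\<Prod>i\<in>I. x i) \<le> (\<Prod>i\<in>I. x i) * exp (\<Sum>i\<in>I. b i)"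
    using assms(1,3) prod_nonneg[of I x] by (intro mult_le_cancel_left1[THEN iffD2]) auto
  also have "\<dots> = (\<Prod>i\<in>I. x i * exp (b i))"
    by (cases "finite I") (simp_all add: exp_sum prod.distrib)
  also have "\<dots> \<le> (\<Prod>i\<in>I. y i)"
    using assms(1,2) by (intro prod_mono) auto
  finally show ?thesis .
qed

lemma prod_ennpow_le_of_exp_sum_nonneg:
  assumes "\<forall>i\<in>I. X i \<noteq> \<top>" "\<forall>i\<in>I. Y i \<noteq> \<top>"
    and "\<forall>i\<in>I. enn2real (X i) powr p i * exp (b i) \<le> enn2real (Y i) powr p i"
    and "0 \<le> (\<Sum>i\<in>I. b i)"
  shows "(\<Prod>i\<in>I. ennpow (X i) (p i)) \<le> (\<Prod>i\<in>I. ennpow (Y i) (p i))"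
  using assms prod_le_prod_of_exp_sum_nonneg[of I "\<lambda>i. enn2real (X i) powr p i" b]
  by (simp add: prod_ennpow_eq_ennreal ennreal_leI)

lemma pos_part_le_exp:
  assumes "0 < (a::real)"
  shows "max 0 t \<le> exp (a * t) / a"
proof (cases "t \<le> 0")
  case False
  have "a * t \<le> exp (a * t)"
    using exp_ge_add_one_self[of "a * t"] by linarith
  then show ?thesis using False assms by (simp add: field_simps)
qed (use assms in auto)

lemma integrable_pos_part_of_exp:
  fixes f :: "'a \<Rightarrow> real"
  assumes "0 < a" "f \<in> borel_measurable M" "integrable M (\<lambda>x. exp (a * f x))"
  shows "integrable M (\<lambda>x. max 0 (f x))"
proof (rule Bochner_Integration.integrable_bound)
  show "integrable M (\<lambda>x. exp (a * f x) / a)"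
    using assms(3) by simp
  show "AE x in M. norm (max 0 (f x)) \<le> norm (exp (a * f x) / a)"
    using pos_part_le_exp[OF assms(1)] assms(1) by auto
qed (use assms(2) in measurable)

lemma neg_part_le_sum_pos_parts:
  fixes f :: "'i \<Rightarrow> real"
  assumes "finite S" "i \<in> S" "0 \<le> (\<Sum>j\<in>S. f j)"
  shows "max 0 (- f i) \<le> (\<Sum>j\<in>S. max 0 (f j))"
proof -
  have "(\<Sum>j\<in>S. f j) = (\<Sum>j\<in>S. max 0 (f j)) - (\<Sum>j\<in>S. max 0 (- f j))"
    by (simp add: sum_subtractf[symmetric]) (intro sum.cong, auto)
  moreover have "max 0 (- f i) \<le> (\<Sum>j\<in>S. max 0 (- f j))"
    using assms by (intro member_le_sum) auto
  ultimately show ?thesis using assms by linarith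
qed

lemma nn_integral_pos_of_AE_density_pos:
  assumes "prob_space (density M g)" "g \<in> borel_measurable M" "f \<in> borel_measurable M"
    and "AE x in density M g. 0 < f x"
  shows "(\<integral>\<^sup>+x. f x \<partial>M) \<noteq> 0"
proof
  assume "(\<integral>\<^sup>+x. f x \<partial>M) = 0"
  then have "AE x in M. f x = 0"
    using assms(3) by (simp add: nn_integral_0_iff_AE)
  then have "AE x in density M g. f x = 0"
    using assms(2) by (auto simp: AE_density elim: AE_mp)
  with assms(4) have "AE x in density M g. False"
    by eventually_elim simp
  with assms(1) show False
    by (simp add: prob_space.AE_False)
qed

lemma
  assumes "plan N \<mu> \<gamma>" "i < N"
  shows plan_marginal: "distr \<gamma> borel (\<lambda>x. x i) = \<mu> i"
    and plan_component_measurable: "(\<lambda>x. x i) \<in> measurable \<gamma> borel"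
    and sets_plan_marginal: "sets (\<mu> i) = sets borel"
proof -
  show marginal: "distr \<gamma> borel (\<lambda>x. x i) = \<mu> i"
    using assms unfolding plan_def by auto
  have "(\<lambda>x. x i) \<in> measurable (PiM {..<N} (\<lambda>_. borel)) borel"
    using assms(2) by (intro measurable_component_singleton) auto
  then show "(\<lambda>x. x i) \<in> measurable \<gamma> borel"
    using assms(1) unfolding plan_def by (subst measurable_cong_sets) auto
  show "sets (\<mu> i) = sets borel"
    by (simp flip: marginal)
qed

lemma plan_AE_component:
  assumes "plan N \<mu> \<gamma>" "i < N" "AE y in \<mu> i. P y" "Measurable.pred borel P"
  shows "AE x in \<gamma>. P (x i)"
proof -
  have "AE y in distr \<gamma> borel (\<lambda>x. x i). P y"
    using assms(3) unfolding plan_marginal[OF assms(1,2)] .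
  then show ?thesis
    using assms(4) plan_component_measurable[OF assms(1,2)] by (subst (asm) AE_distr_iff) auto
qed

lemma
  fixes f :: "'a::euclidean_space \<Rightarrow> real"
  assumes "plan N \<mu> \<gamma>" "i < N" "f \<in> borel_measurable borel"
  shows plan_integrable_component_iff: "integrable \<gamma> (\<lambda>x. f (x i)) \<longleftrightarrow> integrable (\<mu> i) f"
    and plan_integral_component: "(\<integral>x. f (x i) \<partial>\<gamma>) = (\<integral>y. f y \<partial>\<mu> i)"
  using integrable_distr_eq[of "\<lambda>x. x i" \<gamma> borel f] integral_distr[of "\<lambda>x. x i" \<gamma> borel f]
  unfolding plan_marginal[OF assms(1,2)] by (simp_all add: assms plan_component_measurable[OF assms(1,2)])

lemma plan_integrable_of_sum_nonneg:
  fixes f :: "nat \<Rightarrow> 'a::euclidean_space \<Rightarrow> real"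
  assumes plan: "plan N \<mu> \<gamma>" and i: "i < N"
    and f_meas: "\<forall>j<N. f j \<in> borel_measurable borel"
    and pos_int: "\<forall>j<N. integrable (\<mu> j) (\<lambda>y. max 0 (f j y))"
    and sum_nonneg: "AE x in \<gamma>. 0 \<le> (\<Sum>j<N. f j (x j))"
  shows "integrable (\<mu> i) (f i)"
proof -
  have pos_int_\<gamma>: "integrable \<gamma> (\<lambda>x. max 0 (f j (x j)))" if "j < N" for j
    using that pos_int f_meas by (subst plan_integrable_component_iff[OF plan]) auto
  have [measurable]: "(\<lambda>x. f i (x i)) \<in> borel_measurable \<gamma>"
    using f_meas i by (intro measurable_compose[OF plan_component_measurable[OF plan i]]) auto
  have "integrable \<gamma> (\<lambda>x. max 0 (- f i (x i)))"
  proof (rule Bochner_Integration.integrable_bound)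
    show "integrable \<gamma> (\<lambda>x. \<Sum>j<N. max 0 (f j (x j)))"
      using pos_int_\<gamma> by auto
    show "AE x in \<gamma>. norm (max 0 (- f i (x i))) \<le> norm (\<Sum>j<N. max 0 (f j (x j)))"
      using sum_nonneg
    proof eventually_elim
      case (elim x)
      then show ?case
        using neg_part_le_sum_pos_parts[of "{..<N}" i "\<lambda>j. f j (x j)"] i by (simp add: sum_nonneg)
    qed
  qed measurable
  then have "integrable (\<mu> i) (\<lambda>y. max 0 (- f i y))"
    using i f_meas by (subst (asm) plan_integrable_component_iff[OF plan]) auto
  then have "integrable (\<mu> i) (\<lambda>y. max 0 (f i y) - max 0 (- f i y))"
    using pos_int i by auto
  moreover have "(\<lambda>y. max 0 (f i y) - max 0 (- f i y)) = f i"
    by (auto simp: fun_eq_iff)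
  ultimately show ?thesis by simp
qed

lemma plan_sum_integral_nonneg:
  fixes f :: "nat \<Rightarrow> 'a::euclidean_space \<Rightarrow> real"
  assumes plan: "plan N \<mu> \<gamma>"
    and f_meas: "\<forall>i<N. f i \<in> borel_measurable borel"
    and f_int: "\<forall>i<N. integrable (\<mu> i) (f i)"
    and sum_nonneg: "AE x in \<gamma>. 0 \<le> (\<Sum>i<N. f i (x i))"
  shows "0 \<le> (\<Sum>i<N. \<integral>y. f i y \<partial>\<mu> i)"
proof -
  have "(\<Sum>i<N. \<integral>y. f i y \<partial>\<mu> i) = (\<Sum>i<N. \<integral>x. f i (x i) \<partial>\<gamma>)"
    using f_meas by (intro sum.cong) (simp_all add: plan_integral_component[OF plan])
  also have "\<dots> = (\<integral>x. (\<Sum>i<N. f i (x i)) \<partial>\<gamma>)"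
    using f_meas f_int by (intro Bochner_Integration.integral_sum[symmetric])
      (simp add: plan_integrable_component_iff[OF plan])
  also have "\<dots> \<ge> 0"
    using sum_nonneg by (rule integral_nonneg_AE)
  finally show ?thesis .
qed

lemma eL1_borel_measurable: "sets M = sets borel \<Longrightarrow> eL1 M f \<Longrightarrow> f \<in> borel_measurable borel"
  unfolding eL1_def by (simp cong: measurable_cong_sets)

lemma kantorovich_duality_AE_dual_finite:
  assumes "kantorovich_duality N c \<mu> \<gamma> \<Phi>"
  shows "AE x in \<gamma>. \<forall>i\<in>{..<N}. \<bar>\<Phi> i (x i)\<bar> \<noteq> \<infinity>"
proof (rule AE_finite_allI)
  have plan: "plan N \<mu> \<gamma>" and L1: "\<forall>i<N. eL1 (\<mu> i) (\<Phi> i)"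
    using assms unfolding kantorovich_duality_def by auto
  show "AE x in \<gamma>. \<bar>\<Phi> i (x i)\<bar> \<noteq> \<infinity>" if "i \<in> {..<N}" for i
  proof (rule plan_AE_component[OF plan])
    have "eL1 (\<mu> i) (\<Phi> i)" and "\<Phi> i \<in> borel_measurable borel"
      using that L1 by (auto intro: eL1_borel_measurable[OF sets_plan_marginal[OF plan]])
    then show "AE y in \<mu> i. \<bar>\<Phi> i y\<bar> \<noteq> \<infinity>" and "Measurable.pred borel (\<lambda>y. \<bar>\<Phi> i y\<bar> \<noteq> \<infinity>)"
      unfolding eL1_def by (auto intro!: pred_intros_logic)
  qed (use that in simp)
qed simp

lemma kantorovich_duality_AE_slackness:
  assumes duality: "kantorovich_duality N c \<mu> \<gamma> \<Phi>"
  shows "AE x in \<gamma>. (\<forall>i<N. \<bar>\<Phi> i (x i)\<bar> \<noteq> \<infinity>) \<and> (\<Sum>i<N. real_of_ereal (\<Phi> i (x i))) = c x"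
proof -
  have plan: "plan N \<mu> \<gamma>" and c_int: "integrable \<gamma> c" and adm: "admissible N c \<Phi>"
    and L1: "\<forall>i<N. eL1 (\<mu> i) (\<Phi> i)"
    and values_eq: "(\<integral>x. c x \<partial>\<gamma>) = (\<Sum>i<N. eint (\<mu> i) (\<Phi> i))"
    using duality unfolding kantorovich_duality_def by auto
  define \<phi> where "\<phi> i y = real_of_ereal (\<Phi> i y)" for i y
  have \<Phi>_meas: "\<Phi> i \<in> borel_measurable borel" if "i < N" for i
    using L1 that by (intro eL1_borel_measurable[OF sets_plan_marginal[OF plan that]]) simp
  have \<phi>_meas: "\<phi> i \<in> borel_measurable borel" if "i < N" for i
    unfolding \<phi>_def using \<Phi>_meas[OF that] by measurable
  have \<phi>_int: "integrable \<gamma> (\<lambda>x. \<phi> i (x i))" if "i < N" for i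
    using L1 that unfolding plan_integrable_component_iff[OF plan that \<phi>_meas[OF that]] eL1_def
    by (simp add: \<phi>_def[abs_def])
  note finite = kantorovich_duality_AE_dual_finite[OF duality]
  define h where "h x = (\<Sum>i<N. \<phi> i (x i)) - c x" for x
  have h_int: "integrable \<gamma> h"
    unfolding h_def using \<phi>_int c_int
    by (intro Bochner_Integration.integrable_diff Bochner_Integration.integrable_sum) auto
  have h_nonneg: "AE x in \<gamma>. 0 \<le> h x"
    using finite
  proof eventually_elim
    case (elim x)
    have "ereal (c x) \<le> (\<Sum>i<N. \<Phi> i (x i))"
      using adm unfolding admissible_def by auto
    also have "\<dots> = (\<Sum>i<N. ereal (\<phi> i (x i)))"
      using elim by (intro sum.cong) (auto simp: \<phi>_def ereal_real)
    finally show ?case unfolding h_def by simp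
  qed
  have "(\<integral>x. h x \<partial>\<gamma>) = (\<Sum>i<N. \<integral>x. \<phi> i (x i) \<partial>\<gamma>) - (\<integral>x. c x \<partial>\<gamma>)"
    unfolding h_def using \<phi>_int c_int
    by (subst Bochner_Integration.integral_diff) (auto simp: Bochner_Integration.integral_sum)
  also have "(\<Sum>i<N. \<integral>x. \<phi> i (x i) \<partial>\<gamma>) = (\<Sum>i<N. eint (\<mu> i) (\<Phi> i))"
    using plan_integral_component[OF plan _ \<phi>_meas] by (simp add: eint_def \<phi>_def)
  finally have "(\<integral>x. h x \<partial>\<gamma>) = 0"
    using values_eq by simp
  then have "AE x in \<gamma>. h x = 0"
    using integral_nonneg_eq_0_iff_AE[OF h_int h_nonneg] by simp
  with finite show ?thesis
    by eventually_elim (simp add: h_def \<phi>_def)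
qed

lemma admissible_sum_ge:
  assumes "admissible N c V" "\<forall>i<N. V i (x i) \<noteq> \<infinity>"
  shows "c x \<le> (\<Sum>i<N. real_of_ereal (V i (x i)))"
proof -
  have "ereal (c x) \<le> (\<Sum>i<N. V i (x i))"
    using assms(1) unfolding admissible_def by auto
  also have "\<dots> = ereal (\<Sum>i<N. real_of_ereal (V i (x i)))"
    using assms unfolding admissible_def
    by (subst sum_ereal[symmetric], intro sum.cong) (auto simp: ereal_real)
  finally show ?thesis by simp
qed

lemma kantorovich_duality_AE_admissible_ge_dual:
  assumes duality: "kantorovich_duality N c \<mu> \<gamma> \<Phi>"
    and adm: "admissible N c V"
    and V_meas: "\<forall>i<N. V i \<in> borel_measurable borel"
    and V_finite: "\<forall>i<N. AE y in \<mu> i. V i y \<noteq> \<infinity>"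
  shows "AE x in \<gamma>. 0 \<le> (\<Sum>i<N. real_of_ereal (V i (x i)) - real_of_ereal (\<Phi> i (x i)))"
proof -
  have plan: "plan N \<mu> \<gamma>"
    using duality unfolding kantorovich_duality_def by simp
  have "AE x in \<gamma>. \<forall>i\<in>{..<N}. V i (x i) \<noteq> \<infinity>"
    using V_meas V_finite by (intro AE_finite_allI plan_AE_component[OF plan]) auto
  with kantorovich_duality_AE_slackness[OF duality] show ?thesis
  proof eventually_elim
    case (elim x)
    then show ?case
      using admissible_sum_ge[OF adm, of x] by (simp add: sum_subtractf)
  qed
qed

lemma kantorovich_duality_potential_gap:
  fixes V \<Phi> :: "nat \<Rightarrow> 'a::euclidean_space \<Rightarrow> ereal"
  defines "u \<equiv> \<lambda>i y. real_of_ereal (V i y) - real_of_ereal (\<Phi> i y)"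
  assumes duality: "kantorovich_duality N c \<mu> \<gamma> \<Phi>"
    and adm: "admissible N c V"
    and V_meas: "\<forall>i<N. V i \<in> borel_measurable borel"
    and V_finite: "\<forall>i<N. AE y in \<mu> i. V i y \<noteq> \<infinity>"
    and pos_int: "\<forall>i<N. integrable (\<mu> i) (\<lambda>y. max 0 (u i y))"
  shows "\<forall>i<N. integrable (\<mu> i) (u i)" and "0 \<le> (\<Sum>i<N. \<integral>y. u i y \<partial>\<mu> i)"
proof -
  have plan: "plan N \<mu> \<gamma>" and L1: "\<forall>i<N. eL1 (\<mu> i) (\<Phi> i)"
    using duality unfolding kantorovich_duality_def by auto
  have u_meas: "\<forall>i<N. u i \<in> borel_measurable borel"
    using V_meas L1 eL1_borel_measurable[OF sets_plan_marginal[OF plan]]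
    unfolding u_def by (auto intro!: borel_measurable_diff borel_measurable_real_of_ereal)
  have gap: "AE x in \<gamma>. 0 \<le> (\<Sum>i<N. u i (x i))"
    unfolding u_def using kantorovich_duality_AE_admissible_ge_dual[OF duality adm V_meas V_finite] .
  show u_int: "\<forall>i<N. integrable (\<mu> i) (u i)"
    using plan_integrable_of_sum_nonneg[OF plan _ u_meas pos_int gap] by auto
  show "0 \<le> (\<Sum>i<N. \<integral>y. u i y \<partial>\<mu> i)"
    by (rule plan_sum_integral_nonneg[OF plan u_meas u_int gap])
qed

definition partition_function :: "'a measure \<Rightarrow> real \<Rightarrow> ('a \<Rightarrow> ereal) \<Rightarrow> ennreal"
  where "partition_function M a V = (\<integral>\<^sup>+x. ennreal (expneg a (V x)) \<partial>M)"

definition gibbs :: "'a measure \<Rightarrow> real \<Rightarrow> ('a \<Rightarrow> ereal) \<Rightarrow> 'a measure"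
  where "gibbs M a V = density M (\<lambda>x. ennreal (expneg a (V x)) / partition_function M a V)"

lemma sets_gibbs [simp]: "sets (gibbs M a V) = sets M"
  by (simp add: gibbs_def)

lemma measurable_gibbs [simp]: "measurable (gibbs M a V) N = measurable M N"
  by (rule measurable_cong_sets) simp_all

lemma prob_space_gibbs:
  assumes "V \<in> borel_measurable M" "0 < partition_function M a V" "partition_function M a V < \<top>"
  shows "prob_space (gibbs M a V)"
proof (rule prob_spaceI)
  have "emeasure (gibbs M a V) (space M) = partition_function M a V / partition_function M a V"
    using assms(1) by (simp add: gibbs_def emeasure_density nn_integral_divide partition_function_def)
  then show "emeasure (gibbs M a V) (space (gibbs M a V)) = 1"
    using assms(2,3) by (simp add: gibbs_def ennreal_divide_self)
qed

lemma AE_gibbs_finite: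
  assumes "V \<in> borel_measurable M"
  shows "AE x in gibbs M a V. V x \<noteq> \<infinity>"
  using assms unfolding gibbs_def by (subst AE_density) (auto simp: expneg_def)

lemma partition_function_nonzero:
  assumes "V \<in> borel_measurable M" "\<Phi> \<in> borel_measurable M"
    and "0 < partition_function M a V" "partition_function M a V < \<top>"
    and "AE x in gibbs M a V. \<bar>\<Phi> x\<bar> \<noteq> \<infinity>"
  shows "partition_function M a \<Phi> \<noteq> 0"
  unfolding partition_function_def
proof (rule nn_integral_pos_of_AE_density_pos)
  show "prob_space (density M (\<lambda>x. ennreal (expneg a (V x)) / partition_function M a V))"
    using prob_space_gibbs[OF assms(1,3,4)] by (simp add: gibbs_def)
  show "AE x in density M (\<lambda>x. ennreal (expneg a (V x)) / partition_function M a V).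
          0 < ennreal (expneg a (\<Phi> x))"
    using assms(5) unfolding gibbs_def by eventually_elim (simp add: expneg_pos)
qed (use assms(1,2) in measurable)

lemma gibbs_nn_integral_exp_diff_le:
  fixes V \<Phi> :: "'a \<Rightarrow> ereal"
  assumes [measurable]: "V \<in> borel_measurable M" "\<Phi> \<in> borel_measurable M"
    and Z: "0 < partition_function M a V" "partition_function M a V < \<top>"
    and \<Phi>_finite: "AE x in gibbs M a V. \<bar>\<Phi> x\<bar> \<noteq> \<infinity>"
  shows "partition_function M a V *
           (\<integral>\<^sup>+x. ennreal (exp (a * (real_of_ereal (V x) - real_of_ereal (\<Phi> x)))) \<partial>gibbs M a V)
         \<le> partition_function M a \<Phi>"
proof -
  define Z where "Z = partition_function M a V"
  define D where "D x = ennreal (expneg a (V x)) / Z" for x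
  define g where "g x = ennreal (exp (a * (real_of_ereal (V x) - real_of_ereal (\<Phi> x))))" for x
  have D_meas [measurable]: "D \<in> borel_measurable M" and [measurable]: "g \<in> borel_measurable M"
    unfolding D_def g_def by measurable
  have gibbs_eq: "gibbs M a V = density M D"
    by (simp add: gibbs_def D_def[abs_def] Z_def)
  have "Z * (\<integral>\<^sup>+x. g x \<partial>gibbs M a V) = (\<integral>\<^sup>+x. Z * (D x * g x) \<partial>M)"
    by (simp add: gibbs_eq nn_integral_density nn_integral_cmult)
  also have "\<dots> \<le> partition_function M a \<Phi>"
    unfolding partition_function_def
  proof (rule nn_integral_mono_AE)
    have "AE x in M. 0 < D x \<longrightarrow> \<bar>\<Phi> x\<bar> \<noteq> \<infinity>"
      using \<Phi>_finite unfolding gibbs_eq AE_density[OF D_meas] .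
    then show "AE x in M. Z * (D x * g x) \<le> ennreal (expneg a (\<Phi> x))"
    proof eventually_elim
      case (elim x)
      have "Z * (D x * g x) = ennreal (expneg a (V x)) * Z / Z * g x"
        unfolding D_def by (simp add: ennreal_times_divide mult_ac)
      also have "\<dots> = ennreal (expneg a (V x)) * g x"
        using Z unfolding Z_def by (simp add: ennreal_mult_divide_eq)
      also have "\<dots> \<le> ennreal (expneg a (\<Phi> x))"
      proof (cases "0 < D x")
        case False
        then show ?thesis
          using Z unfolding D_def Z_def by (auto simp: ennreal_divide_eq_0_iff)
      next
        case True
        then show ?thesis
          using elim expneg_mult_exp_le[of "\<Phi> x" a "V x"] unfolding g_def
          by (simp add: ennreal_mult'' [symmetric] expneg_nonneg)
      qed
      finally show ?case .
    qed
  qed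
  finally show ?thesis unfolding g_def Z_def .
qed

lemma gibbs_integrable_exp_diff:
  fixes V \<Phi> :: "'a \<Rightarrow> ereal"
  assumes [measurable]: "V \<in> borel_measurable M" "\<Phi> \<in> borel_measurable M"
    and Z: "0 < partition_function M a V" "partition_function M a V < \<top>"
    and "AE x in gibbs M a V. \<bar>\<Phi> x\<bar> \<noteq> \<infinity>"
    and P: "partition_function M a \<Phi> < \<top>"
  shows "integrable (gibbs M a V) (\<lambda>x. exp (a * (real_of_ereal (V x) - real_of_ereal (\<Phi> x))))"
proof -
  let ?I = "\<integral>\<^sup>+x. ennreal (exp (a * (real_of_ereal (V x) - real_of_ereal (\<Phi> x)))) \<partial>gibbs M a V"
  have "partition_function M a V * ?I < \<top>"
    using gibbs_nn_integral_exp_diff_le[OF assms(1-5)] P by (rule le_less_trans)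
  then have "?I < \<top>"
    using Z by (auto simp: ennreal_mult_less_top top.not_eq_extremum)
  moreover have "(\<lambda>x. exp (a * (real_of_ereal (V x) - real_of_ereal (\<Phi> x)))) \<in> borel_measurable M"
    by measurable
  ultimately show ?thesis
    by (simp add: integrable_iff_bounded)
qed

lemma gibbs_jensen_bound:
  fixes V \<Phi> :: "'a \<Rightarrow> ereal"
  defines "u \<equiv> \<lambda>x. real_of_ereal (V x) - real_of_ereal (\<Phi> x)"
  assumes a: "0 < a" and [measurable]: "V \<in> borel_measurable M" "\<Phi> \<in> borel_measurable M"
    and Z: "0 < partition_function M a V" "partition_function M a V < \<top>"
    and "AE x in gibbs M a V. \<bar>\<Phi> x\<bar> \<noteq> \<infinity>"
    and P: "partition_function M a \<Phi> < \<top>"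
    and u_int: "integrable (gibbs M a V) u"
  shows "enn2real (partition_function M a V) powr (1 / a) * exp (\<integral>x. u x \<partial>gibbs M a V)
           \<le> enn2real (partition_function M a \<Phi>) powr (1 / a)"
proof -
  interpret prob_space "gibbs M a V"
    using Z by (intro prob_space_gibbs) auto
  define z where "z = enn2real (partition_function M a V)"
  define p where "p = enn2real (partition_function M a \<Phi>)"
  define G where "G = (\<integral>x. exp (a * u x) \<partial>gibbs M a V)"
  have exp_int: "integrable (gibbs M a V) (\<lambda>x. exp (a * u x))"
    unfolding u_def using gibbs_integrable_exp_diff[OF assms(3-8)] .
  have "exp (\<integral>x. a * u x \<partial>gibbs M a V) \<le> G"
    unfolding G_def using u_int exp_int
    by (intro jensens_inequality[where I = UNIV]) (auto simp: exp_convex)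
  then have "exp (a * (\<integral>x. u x \<partial>gibbs M a V)) \<le> G"
    by simp
  moreover have "z * G \<le> p"
  proof -
    have "(\<integral>\<^sup>+x. ennreal (exp (a * u x)) \<partial>gibbs M a V) = ennreal G"
      unfolding G_def using exp_int by (intro nn_integral_eq_integral) auto
    then have "ennreal (z * G) \<le> ennreal p"
      using gibbs_nn_integral_exp_diff_le[OF assms(3-7)] Z P
      by (simp add: z_def p_def u_def ennreal_mult G_def less_top)
    then show ?thesis
      unfolding p_def by (simp add: ennreal_le_iff)
  qed
  ultimately have "z * exp (a * (\<integral>x. u x \<partial>gibbs M a V)) \<le> p"
    using mult_left_mono[of _ G z] by (force simp: z_def)
  then have "(z * exp (a * (\<integral>x. u x \<partial>gibbs M a V))) powr (1 / a) \<le> p powr (1 / a)"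
    using a by (intro powr_mono2) (auto simp: z_def)
  then show ?thesis
    using a by (simp add: z_def p_def powr_mult exp_powr_real)
qed

lemma gibbs_integrable_pos_part_diff:
  fixes V \<Phi> :: "'a \<Rightarrow> ereal"
  assumes "0 < a" "V \<in> borel_measurable M" "\<Phi> \<in> borel_measurable M"
    and "0 < partition_function M a V" "partition_function M a V < \<top>"
    and "AE x in gibbs M a V. \<bar>\<Phi> x\<bar> \<noteq> \<infinity>"
    and "partition_function M a \<Phi> < \<top>"
  shows "integrable (gibbs M a V) (\<lambda>x. max 0 (real_of_ereal (V x) - real_of_ereal (\<Phi> x)))"
  using assms(2,3)
  by (intro integrable_pos_part_of_exp[OF assms(1) _ gibbs_integrable_exp_diff[OF assms(2-7)]]) simp

theorem theorem2p1:
  fixes N :: nat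
    and c :: "(nat \<Rightarrow> 'a::euclidean_space) \<Rightarrow> real"
    and \<alpha> :: "nat \<Rightarrow> real"
    and m :: "nat \<Rightarrow> 'a measure"
    and V Phi :: "nat \<Rightarrow> 'a \<Rightarrow> ereal"
    and \<nu> :: "nat \<Rightarrow> 'a measure"
    and gam :: "(nat \<Rightarrow> 'a) measure"
  assumes alpha_pos: "\<forall>i<N. \<alpha> i > 0"
    and m_sets: "\<forall>i<N. sets (m i) = sets borel"
    and V_meas: "\<forall>i<N. V i \<in> borel_measurable borel"
    and V_adm: "admissible N c V"
    and Z_pos: "\<forall>i<N. 0 < (\<integral>\<^sup>+ x. ennreal (expneg (\<alpha> i) (V i x)) \<partial>m i)"
    and Z_fin: "\<forall>i<N. (\<integral>\<^sup>+ x. ennreal (expneg (\<alpha> i) (V i x)) \<partial>m i) < \<infinity>"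
    and nu_def: "\<forall>i<N. \<nu> i = density (m i)
                   (\<lambda>x. ennreal (expneg (\<alpha> i) (V i x))
                         / (\<integral>\<^sup>+ y. ennreal (expneg (\<alpha> i) (V i y)) \<partial>m i))"
    and duality: "kantorovich_duality N c \<nu> gam Phi"
  shows "(\<Prod>i<N. ennpow (\<integral>\<^sup>+ x. ennreal (expneg (\<alpha> i) (V i x)) \<partial>m i) (1 / \<alpha> i))
         \<le> (\<Prod>i<N. ennpow (\<integral>\<^sup>+ x. ennreal (expneg (\<alpha> i) (Phi i x)) \<partial>m i) (1 / \<alpha> i))"
proof -
  define Z where "Z i = partition_function (m i) (\<alpha> i) (V i)" for i
  define P where "P i = partition_function (m i) (\<alpha> i) (Phi i)" for i
  define u where "u i x = real_of_ereal (V i x) - real_of_ereal (Phi i x)" for i x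
  have plan: "plan N \<nu> gam" and Phi_L1: "\<forall>i<N. eL1 (\<nu> i) (Phi i)"
    using duality unfolding kantorovich_duality_def by auto
  have \<nu>_gibbs: "\<nu> i = gibbs (m i) (\<alpha> i) (V i)" if "i < N" for i
    using nu_def that by (simp add: gibbs_def partition_function_def)
  have V_m: "V i \<in> borel_measurable (m i)" and Phi_m: "Phi i \<in> borel_measurable (m i)" if "i < N" for i
    using that V_meas m_sets Phi_L1 eL1_borel_measurable[OF sets_plan_marginal[OF plan]]
    by (simp_all cong: measurable_cong_sets)
  have Z: "0 < Z i" "Z i < \<top>" if "i < N" for i
    using that Z_pos Z_fin by (simp_all add: Z_def partition_function_def)
  have Phi_finite: "AE x in gibbs (m i) (\<alpha> i) (V i). \<bar>Phi i x\<bar> \<noteq> \<infinity>" if "i < N" for i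
    using Phi_L1 that unfolding eL1_def \<nu>_gibbs[OF that, symmetric] by simp
  note gibbs_facts = V_m Phi_m Z[unfolded Z_def] Phi_finite
  show ?thesis
  proof (cases "\<exists>k<N. P k = \<top>")
    case True
    moreover have "P i \<noteq> 0" if "i < N" for i
      unfolding P_def using partition_function_nonzero[OF gibbs_facts[OF that]] .
    ultimately have "(\<Prod>i<N. ennpow (P i) (1 / \<alpha> i)) = \<top>"
      by (auto intro: prod_ennpow_eq_top)
    then show ?thesis
      by (simp add: P_def partition_function_def)
  next
    case False
    then have P: "P i < \<top>" if "i < N" for i
      using that by (simp add: top.not_eq_extremum)
    have V_finite: "\<forall>i<N. AE x in \<nu> i. V i x \<noteq> \<infinity>"
      using \<nu>_gibbs AE_gibbs_finite[OF V_m] by metis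
    have "\<forall>i<N. integrable (\<nu> i) (\<lambda>x. max 0 (u i x))"
      using gibbs_integrable_pos_part_diff[OF _ gibbs_facts P[unfolded P_def]] alpha_pos
      by (simp add: \<nu>_gibbs u_def)
    from kantorovich_duality_potential_gap[OF duality V_adm V_meas V_finite, folded u_def, OF this]
    have u_int: "\<forall>i<N. integrable (\<nu> i) (u i)" and gap: "0 \<le> (\<Sum>i<N. \<integral>x. u i x \<partial>\<nu> i)" .
    have "\<forall>i\<in>{..<N}. enn2real (Z i) powr (1 / \<alpha> i) * exp (\<integral>x. u i x \<partial>\<nu> i)
            \<le> enn2real (P i) powr (1 / \<alpha> i)"
      using gibbs_jensen_bound[OF _ gibbs_facts P[unfolded P_def]] alpha_pos u_int
      by (simp add: \<nu>_gibbs u_def[abs_def] Z_def P_def)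
    then have "(\<Prod>i<N. ennpow (Z i) (1 / \<alpha> i)) \<le> (\<Prod>i<N. ennpow (P i) (1 / \<alpha> i))"
      using gap P Z(2) by (intro prod_ennpow_le_of_exp_sum_nonneg) (auto simp: less_top)
    then show ?thesis
      by (simp add: Z_def P_def partition_function_def)
  qed
qed

end
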